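(* Let $n\geq 2$ and fix indices $1\leq k\neq l\leq n$. Then $\mathrm{Aut}(W_n)$ is generated by the set $Y=\{\sigma_{kl}\}\cup\{\alpha_{(i,i+1)}\mid i=1,\dots,n-1\}$.
   Context: $W_n=\langle s_1,\dots,s_n\mid s_1^2,\dots,s_n^2\rangle$. For $1\leq i\neq j\leq n$ the partial conjugation $\sigma_{ij}\in\mathrm{Aut}(W_n)$ is defined by $\sigma_{ij}(s_j)=s_is_js_i$ and $\sigma_{ij}(s_k)=s_k$ for $k\neq j$. For $\pi\in\mathrm{Sym}(n)$, the permutation automorphism $\alpha_\pi$ is defined by $\alpha_\pi(s_k)=s_{\pi(k)}$; $(i,i+1)$ denotes a transposition. *)

theory Defs
  imports "HOL-Algebra.Algebra" "HOL-Combinatorics.Transposition"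
begin

text \<open>Normal forms in the right-angled Coxeter group W_n = free product of n copies
of Z/2 generated by s_1..s_n: words over letters 1..n with no two equal adjacent letters.
The word [i] represents s_i.\<close>

fun red :: "nat list \<Rightarrow> nat list" where
  "red [] = []"
| "red (x # xs) = (case red xs of [] \<Rightarrow> [x] | y # ys \<Rightarrow> (if x = y then ys else x # y # ys))"

definition W :: "nat \<Rightarrow> nat list monoid" where
  "W n = \<lparr>carrier = {w. set w \<subseteq> {1..n} \<and> successively (\<lambda>a b. a \<noteq> b) w},
          monoid.mult = (\<lambda>u v. red (u @ v)),
          one = []\<rparr>"

definition ext_hom :: "(nat \<Rightarrow> nat list) \<Rightarrow> nat list \<Rightarrow> nat list" where
  "ext_hom f w = red (concat (map f w))"

definition sigma :: "nat \<Rightarrow> nat \<Rightarrow> nat \<Rightarrow> (nat list \<Rightarrow> nat list)" where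
  "sigma n i j = (\<lambda>w \<in> carrier (W n). ext_hom (\<lambda>x. if x = j then [i, j, i] else [x]) w)"

definition alpha :: "nat \<Rightarrow> (nat \<Rightarrow> nat) \<Rightarrow> (nat list \<Rightarrow> nat list)" where
  "alpha n p = (\<lambda>w \<in> carrier (W n). ext_hom (\<lambda>x. [p x]) w)"

end

theory Submission
  imports Defs "HOL-Library.Sublist" "HOL-Combinatorics.Permutations"
begin

text \<open>An automorphism f of W_n maps every generator to an involution, and the involutions of
  W_n are exactly the reduced palindromes w a w^-1. If some f(s_i) = w_i a_i w_i^-1 has w_i
  nonempty, a ping-pong argument on reduced words shows that w_k a_k is a prefix of w_i for some
  k \<noteq> i; then f \<circ> sigma_ki replaces f(s_i) by the shorter word f(s_k) f(s_i) f(s_k). Induction on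
  the total length of the images of the generators therefore reduces f to a permutation
  automorphism. Finally, adjacent transpositions generate all alpha_\<pi>, and conjugating sigma_kl
  by them gives alpha_\<pi> sigma_kl alpha_\<pi>^-1 = sigma_(\<pi> k)(\<pi> l), hence every partial
  conjugation.\<close>

section \<open>Reduced words\<close>

abbreviation reduced :: "nat list \<Rightarrow> bool" where
  "reduced w \<equiv> successively (\<noteq>) w"

definition cancel_cons :: "nat \<Rightarrow> nat list \<Rightarrow> nat list" where
  "cancel_cons x r = (case r of [] \<Rightarrow> [x] | y # ys \<Rightarrow> (if x = y then ys else x # y # ys))"

lemma red_Cons: "red (x # xs) = cancel_cons x (red xs)"
  by (simp add: cancel_cons_def)

declare red.simps(2)[simp del]

lemma reduced_cancel_cons: "reduced r \<Longrightarrow> reduced (cancel_cons x r)"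
  by (cases r) (auto simp: cancel_cons_def successively_Cons)

lemma reduced_red: "reduced (red w)"
  by (induct w) (auto simp: red_Cons reduced_cancel_cons)

lemma set_red: "set (red w) \<subseteq> set w"
proof (induct w)
  case (Cons x w)
  then show ?case
    by (cases "red w") (auto simp: red_Cons cancel_cons_def)
qed simp

lemma length_red: "length (red w) \<le> length w"
proof (induct w)
  case (Cons x w)
  then show ?case
    by (cases "red w") (auto simp: red_Cons cancel_cons_def)
qed simp

lemma red_reduced: "reduced w \<Longrightarrow> red w = w"
  by (induct w) (auto simp: red_Cons cancel_cons_def successively_Cons split: list.splits)

lemma cancel_cons_cancel_cons: "reduced r \<Longrightarrow> cancel_cons x (cancel_cons x r) = r"
  by (cases r) (auto simp: cancel_cons_def successively_Cons split: list.splits)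

lemma red_append_red_right: "red (xs @ red ys) = red (xs @ ys)"
  by (induct xs) (auto simp: red_Cons red_reduced reduced_red)

lemma red_cancel_cons_append:
  assumes "reduced r"
  shows "red (cancel_cons x r @ ys) = cancel_cons x (red (r @ ys))"
proof (cases r)
  case (Cons y rs)
  show ?thesis
  proof (cases "x = y")
    case True
    then have "cancel_cons x r = rs"
      using Cons by (simp add: cancel_cons_def)
    then show ?thesis
      using Cons True by (simp add: red_Cons cancel_cons_cancel_cons reduced_red)
  qed (use Cons in \<open>simp add: cancel_cons_def red_Cons\<close>)
qed (simp add: cancel_cons_def red_Cons)

lemma red_append_red_left: "red (red xs @ ys) = red (xs @ ys)"
  by (induct xs) (auto simp: red_Cons red_cancel_cons_append reduced_red)

lemma red_append_red: "red (red xs @ red ys) = red (xs @ ys)"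
  by (simp add: red_append_red_left red_append_red_right)

lemma red_append_rev_self: "red (u @ rev u) = []"
proof (induct u)
  case (Cons x u)
  have "red ((x # u) @ rev (x # u)) = red (red (x # u @ rev u) @ [x])"
    by (simp add: red_append_red_left)
  also have "red (x # u @ rev u) = [x]"
    using Cons by (simp add: red_Cons cancel_cons_def)
  finally show ?case by (simp add: red_Cons cancel_cons_def)
qed simp

lemma red_cancel_middle: "red (xs @ rev p @ p @ ys) = red (xs @ ys)"
proof -
  have "red (rev p @ p @ ys) = red ys"
    using red_append_red_left[of "rev p @ p" ys] red_append_rev_self[of "rev p"] by simp
  then show ?thesis by (metis red_append_red_right)
qed

lemma red_cancel_pair: "red (xs @ [a, a] @ ys) = red (xs @ ys)"
  using red_cancel_middle[of xs "[a]"] by simp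

lemma reduced_rev: "reduced (rev u) \<longleftrightarrow> reduced u"
  by (auto simp: successively_rev intro: successively_mono)

lemma red_append_eq_Nil_imp_rev:
  assumes "reduced u" "reduced v" "red (u @ v) = []"
  shows "v = rev u"
proof -
  have "red v = red (rev u @ u @ v)"
    using red_cancel_middle[of "[]" u v] by simp
  also have "\<dots> = red (rev u)"
    using red_append_red_right[of "rev u" "u @ v"] assms(3) by simp
  finally show ?thesis
    using assms(1,2) red_reduced[of v] red_reduced[OF reduced_rev[THEN iffD2]] by simp
qed

section \<open>The group \<open>W\<^sub>n\<close> and its endomorphisms\<close>

lemma W_carrier: "carrier (W n) = {w. set w \<subseteq> {1..n} \<and> reduced w}"
  by (simp add: W_def)

lemma W_mult: "x \<otimes>\<^bsub>W n\<^esub> y = red (x @ y)"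
  by (simp add: W_def)

lemma W_one: "\<one>\<^bsub>W n\<^esub> = []"
  by (simp add: W_def)

lemma red_in_carrier_W: "set w \<subseteq> {1..n} \<Longrightarrow> red w \<in> carrier (W n)"
  using set_red[of w] reduced_red[of w] by (auto simp: W_carrier)

lemma letter_in_carrier_W: "x \<in> {1..n} \<Longrightarrow> [x] \<in> carrier (W n)"
  by (simp add: W_carrier)

lemma group_W: "group (W n)"
proof (rule groupI)
  fix x y assume "x \<in> carrier (W n)" "y \<in> carrier (W n)"
  then show "x \<otimes>\<^bsub>W n\<^esub> y \<in> carrier (W n)"
    unfolding W_mult by (intro red_in_carrier_W) (auto simp: W_carrier)
next
  fix x y z
  show "x \<otimes>\<^bsub>W n\<^esub> y \<otimes>\<^bsub>W n\<^esub> z = x \<otimes>\<^bsub>W n\<^esub> (y \<otimes>\<^bsub>W n\<^esub> z)"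
    by (simp add: W_mult red_append_red_left red_append_red_right)
next
  fix x assume "x \<in> carrier (W n)"
  then show "\<one>\<^bsub>W n\<^esub> \<otimes>\<^bsub>W n\<^esub> x = x"
    by (simp add: W_mult W_one W_carrier red_reduced)
  show "\<exists>y\<in>carrier (W n). y \<otimes>\<^bsub>W n\<^esub> x = \<one>\<^bsub>W n\<^esub>"
    using \<open>x \<in> carrier (W n)\<close> red_append_rev_self[of "rev x"]
    by (intro bexI[of _ "rev x"]) (auto simp: W_mult W_one W_carrier reduced_rev simp del: successively_rev)
qed (simp add: W_one W_carrier)

lemma red_concat_map_red:
  assumes "\<forall>x\<in>set w. red (f x @ f x) = []"
  shows "red (concat (map f (red w))) = red (concat (map f w))"
  using assms
proof (induct w)
  case (Cons x w)
  have "red (concat (map f (cancel_cons x r))) = red (f x @ concat (map f r))" for r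
  proof (cases r)
    case (Cons y ys)
    then show ?thesis
      using red_append_red_left[of "f x @ f x" "concat (map f ys)"] Cons.prems
      by (auto simp: cancel_cons_def)
  qed (simp add: cancel_cons_def)
  then have "red (concat (map f (red (x # w)))) = red (f x @ red (concat (map f (red w))))"
    by (simp add: red_Cons red_append_red_right)
  also have "\<dots> = red (concat (map f (x # w)))"
    using Cons by (simp add: red_append_red_right)
  finally show ?case .
qed simp

lemma red_concat_map_red_images: "red (concat (map (\<lambda>x. red (f x)) w)) = red (concat (map f w))"
proof (induct w)
  case (Cons x w)
  then show ?case
    by (metis concat.simps(2) list.simps(9) red_append_red red_append_red_left)
qed simp

lemma ext_hom_letter: "ext_hom f [x] = red (f x)"
  by (simp add: ext_hom_def)

lemma ext_hom_cong: "(\<And>x. x \<in> set w \<Longrightarrow> f x = g x) \<Longrightarrow> ext_hom f w = ext_hom g w"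
  by (simp add: ext_hom_def cong: map_cong)

lemma ext_hom_letters: "reduced w \<Longrightarrow> ext_hom (\<lambda>x. [x]) w = w"
  by (simp add: ext_hom_def red_reduced)

lemma ext_hom_ext_hom:
  assumes "\<forall>x\<in>set (concat (map g w)). red (f x @ f x) = []"
  shows "ext_hom f (ext_hom g w) = ext_hom (\<lambda>x. ext_hom f (g x)) w"
proof -
  have "ext_hom f (ext_hom g w) = red (concat (map f (concat (map g w))))"
    unfolding ext_hom_def using red_concat_map_red[OF assms] .
  also have "concat (map f (concat (map g w))) = concat (map (\<lambda>x. concat (map f (g x))) w)"
    by (induct w) auto
  finally show ?thesis
    unfolding ext_hom_def by (simp add: red_concat_map_red_images)
qed

abbreviation Aut :: "nat \<Rightarrow> (nat list \<Rightarrow> nat list) monoid" where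
  "Aut n \<equiv> AutoGroup (W n)"

lemma Aut_carrier: "carrier (Aut n) = auto (W n)"
  by (simp add: AutoGroup_def BijGroup_def)

lemma Aut_mult:
  "f \<in> auto (W n) \<Longrightarrow> g \<in> auto (W n) \<Longrightarrow> f \<otimes>\<^bsub>Aut n\<^esub> g = compose (carrier (W n)) f g"
  by (simp add: AutoGroup_def BijGroup_def auto_def)

lemma group_Aut: "group (Aut n)"
  using group.AutoGroup[OF group_W] .

lemma Aut_mult_closed: "f \<in> auto (W n) \<Longrightarrow> g \<in> auto (W n) \<Longrightarrow> f \<otimes>\<^bsub>Aut n\<^esub> g \<in> auto (W n)"
  using monoid.m_closed[OF group.is_monoid[OF group_Aut]] by (simp add: Aut_carrier)

definition involutive_images :: "nat \<Rightarrow> (nat \<Rightarrow> nat list) \<Rightarrow> bool" where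
  "involutive_images n f \<longleftrightarrow> (\<forall>x\<in>{1..n}. set (f x) \<subseteq> {1..n} \<and> red (f x @ f x) = [])"

definition ext_endo :: "nat \<Rightarrow> (nat \<Rightarrow> nat list) \<Rightarrow> nat list \<Rightarrow> nat list" where
  "ext_endo n f = (\<lambda>w\<in>carrier (W n). ext_hom f w)"

lemma ext_hom_in_carrier_W:
  "involutive_images n f \<Longrightarrow> w \<in> carrier (W n) \<Longrightarrow> ext_hom f w \<in> carrier (W n)"
  unfolding ext_hom_def by (intro red_in_carrier_W) (auto simp: involutive_images_def W_carrier)

lemma ext_endo_hom:
  assumes f: "involutive_images n f"
  shows "ext_endo n f \<in> hom (W n) (W n)"
proof (rule homI)
  fix x assume "x \<in> carrier (W n)"
  then show "ext_endo n f x \<in> carrier (W n)"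
    by (simp add: ext_endo_def ext_hom_in_carrier_W[OF f])
next
  fix x y assume x: "x \<in> carrier (W n)" and y: "y \<in> carrier (W n)"
  have "ext_hom f (red (x @ y)) = red (concat (map f x) @ concat (map f y))"
    unfolding ext_hom_def
    using x y f by (subst red_concat_map_red) (auto simp: involutive_images_def W_carrier)
  then have "ext_hom f (red (x @ y)) = red (ext_hom f x @ ext_hom f y)"
    by (simp add: ext_hom_def red_append_red)
  moreover have "red (x @ y) \<in> carrier (W n)"
    using x y by (intro red_in_carrier_W) (auto simp: W_carrier)
  ultimately show "ext_endo n f (x \<otimes>\<^bsub>W n\<^esub> y) = ext_endo n f x \<otimes>\<^bsub>W n\<^esub> ext_endo n f y"
    using x y by (simp add: ext_endo_def W_mult)
qed

lemma ext_endo_letter: "x \<in> {1..n} \<Longrightarrow> reduced (f x) \<Longrightarrow> ext_endo n f [x] = f x"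
  by (simp add: ext_endo_def letter_in_carrier_W ext_hom_letter red_reduced)

lemma hom_W_eq_ext_hom:
  assumes h: "h \<in> hom (W n) (W n)" and w: "w \<in> carrier (W n)"
  shows "h w = ext_hom (\<lambda>x. h [x]) w"
  using w
proof (induct w)
  case Nil
  then show ?case
    using hom_one[OF h group_W group_W] by (simp add: W_one ext_hom_def)
next
  case (Cons x w)
  have w: "w \<in> carrier (W n)" and x: "[x] \<in> carrier (W n)"
    using Cons.prems by (auto simp: W_carrier successively_Cons)
  have "x # w = [x] \<otimes>\<^bsub>W n\<^esub> w"
    using Cons.prems by (simp add: W_mult W_carrier red_reduced)
  then have "h (x # w) = red (h [x] @ h w)"
    using hom_mult[OF h x w] by (simp add: W_mult)
  then show ?case
    using Cons w by (simp add: ext_hom_def red_append_red_right)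
qed

lemma ext_endo_auto:
  assumes f: "involutive_images n f" and g: "involutive_images n g"
    and gf: "\<And>x. x \<in> {1..n} \<Longrightarrow> ext_hom g (f x) = [x]"
    and fg: "\<And>x. x \<in> {1..n} \<Longrightarrow> ext_hom f (g x) = [x]"
  shows "ext_endo n f \<in> auto (W n)"
proof -
  have inverse: "ext_hom g' (ext_hom f' w) = w"
    if "w \<in> carrier (W n)" "involutive_images n f'" "involutive_images n g'"
      "\<And>x. x \<in> {1..n} \<Longrightarrow> ext_hom g' (f' x) = [x]" for f' g' w
  proof -
    have "ext_hom g' (ext_hom f' w) = ext_hom (\<lambda>x. ext_hom g' (f' x)) w"
      using that by (intro ext_hom_ext_hom) (auto simp: involutive_images_def W_carrier)
    also have "\<dots> = ext_hom (\<lambda>x. [x]) w"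
      using that by (intro ext_hom_cong) (auto simp: W_carrier)
    finally show ?thesis
      using that(1) by (simp add: ext_hom_letters W_carrier)
  qed
  have "\<forall>w\<in>carrier (W n). ext_hom g (ext_hom f w) = w"
    using inverse[OF _ f g gf] by blast
  moreover have "\<forall>w\<in>carrier (W n). ext_hom f (ext_hom g w) = w"
    using inverse[OF _ g f fg] by blast
  ultimately have "bij_betw (ext_endo n f) (carrier (W n)) (carrier (W n))"
    by (intro bij_betw_byWitness[where f' = "ext_endo n g"])
      (auto simp: ext_endo_def ext_hom_in_carrier_W f g)
  then show ?thesis
    using ext_endo_hom[OF f] by (simp add: auto_def Bij_def ext_endo_def)
qed

lemma Aut_eqI:
  assumes "f \<in> auto (W n)" "g \<in> auto (W n)" "\<And>i. i \<in> {1..n} \<Longrightarrow> f [i] = g [i]"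
  shows "f = g"
proof
  fix w
  show "f w = g w"
  proof (cases "w \<in> carrier (W n)")
    case True
    have "f w = ext_hom (\<lambda>x. f [x]) w"
      using assms True by (intro hom_W_eq_ext_hom) (auto simp: auto_def)
    also have "\<dots> = ext_hom (\<lambda>x. g [x]) w"
      using True assms(3) by (intro ext_hom_cong) (auto simp: W_carrier)
    also have "\<dots> = g w"
      using assms True by (intro hom_W_eq_ext_hom[symmetric]) (auto simp: auto_def)
    finally show ?thesis .
  next
    case False
    then show ?thesis
      using assms(1,2) by (auto simp: auto_def Bij_def extensional_def)
  qed
qed

section \<open>Permutation automorphisms and partial conjugations\<close>

lemma alpha_eq_ext_endo: "alpha n p = ext_endo n (\<lambda>x. [p x])"
  by (simp add: alpha_def ext_endo_def)

lemma alpha_auto: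
  assumes p: "p permutes {1..n}"
  shows "alpha n p \<in> auto (W n)"
  unfolding alpha_eq_ext_endo
proof (rule ext_endo_auto[where g = "\<lambda>x. [Hilbert_Choice.inv p x]"])
  show "involutive_images n (\<lambda>x. [p x])" "involutive_images n (\<lambda>x. [Hilbert_Choice.inv p x])"
    using permutes_in_image[OF p] permutes_in_image[OF permutes_inv[OF p]]
    by (auto simp: involutive_images_def red_Cons cancel_cons_def)
qed (auto simp: ext_hom_letter red_Cons cancel_cons_def permutes_inverses[OF p])

lemma alpha_letter: "x \<in> {1..n} \<Longrightarrow> alpha n p [x] = [p x]"
  by (simp add: alpha_eq_ext_endo ext_endo_letter)

lemma alpha_id: "alpha n id = \<one>\<^bsub>Aut n\<^esub>"
proof (rule Aut_eqI[OF alpha_auto[OF permutes_id]])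
  show "\<one>\<^bsub>Aut n\<^esub> \<in> auto (W n)"
    using group.id_in_auto[OF group_W] by (simp add: AutoGroup_def BijGroup_def)
qed (simp add: alpha_letter AutoGroup_def BijGroup_def letter_in_carrier_W)

lemma alpha_comp:
  assumes p: "p permutes {1..n}" and q: "q permutes {1..n}"
  shows "alpha n (p \<circ> q) = alpha n p \<otimes>\<^bsub>Aut n\<^esub> alpha n q"
proof (rule Aut_eqI)
  show "alpha n (p \<circ> q) \<in> auto (W n)"
    using alpha_auto[OF permutes_compose[OF q p]] .
  show "alpha n p \<otimes>\<^bsub>Aut n\<^esub> alpha n q \<in> auto (W n)"
    using Aut_mult_closed[OF alpha_auto[OF p] alpha_auto[OF q]] .
  fix i assume i: "i \<in> {1..n}"
  then have "q i \<in> {1..n}"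
    using permutes_in_image[OF q] by simp
  then show "alpha n (p \<circ> q) [i] = (alpha n p \<otimes>\<^bsub>Aut n\<^esub> alpha n q) [i]"
    using i by (simp add: Aut_mult[OF alpha_auto[OF p] alpha_auto[OF q]] compose_def
        letter_in_carrier_W alpha_letter)
qed

lemma sigma_eq_ext_endo: "sigma n i j = ext_endo n (\<lambda>x. if x = j then [i, j, i] else [x])"
  by (simp add: sigma_def ext_endo_def)

text \<open>A partial conjugation is an involution, so it is its own inverse.\<close>

lemma sigma_auto:
  assumes "i \<in> {1..n}" "j \<in> {1..n}" "i \<noteq> j"
  shows "sigma n i j \<in> auto (W n)"
  unfolding sigma_eq_ext_endo
  by (rule ext_endo_auto[where g = "\<lambda>x. if x = j then [i, j, i] else [x]"])
    (use assms in \<open>auto simp: involutive_images_def red_Cons cancel_cons_def ext_hom_def\<close>)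

lemma sigma_letter:
  "i \<noteq> j \<Longrightarrow> x \<in> {1..n} \<Longrightarrow> sigma n i j [x] = (if x = j then [i, j, i] else [x])"
  by (simp add: sigma_eq_ext_endo ext_endo_letter)

lemma alpha_mult_sigma:
  assumes p: "p permutes {1..n}" and ij: "i \<in> {1..n}" "j \<in> {1..n}" "i \<noteq> j"
  shows "alpha n p \<otimes>\<^bsub>Aut n\<^esub> sigma n i j = sigma n (p i) (p j) \<otimes>\<^bsub>Aut n\<^esub> alpha n p"
proof -
  have pij: "p i \<in> {1..n}" "p j \<in> {1..n}" "p i \<noteq> p j"
    using ij permutes_in_image[OF p] permutes_inj[OF p] by (auto simp: inj_eq)
  have auts: "alpha n p \<in> auto (W n)" "sigma n i j \<in> auto (W n)" "sigma n (p i) (p j) \<in> auto (W n)"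
    using alpha_auto[OF p] sigma_auto[OF ij] sigma_auto[OF pij] by auto
  show ?thesis
  proof (rule Aut_eqI[OF Aut_mult_closed Aut_mult_closed])
    fix x assume x: "x \<in> {1..n}"
    have "[i, j, i] \<in> carrier (W n)"
      using ij by (simp add: W_carrier)
    then have "alpha n p [i, j, i] = [p i, p j, p i]"
      using pij by (simp add: alpha_def ext_hom_def red_Cons cancel_cons_def)
    moreover have "p x \<in> {1..n}" "p x = p j \<longleftrightarrow> x = j"
      using x permutes_in_image[OF p] permutes_inj[OF p] by (auto simp: inj_eq)
    ultimately show "(alpha n p \<otimes>\<^bsub>Aut n\<^esub> sigma n i j) [x] = (sigma n (p i) (p j) \<otimes>\<^bsub>Aut n\<^esub> alpha n p) [x]"
      using x ij pij auts
      by (simp add: Aut_mult compose_def letter_in_carrier_W sigma_letter alpha_letter \<open>[i, j, i] \<in> carrier (W n)\<close>)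
  qed (use auts in auto)
qed

lemma alpha_transpose_in_subgroup:
  assumes H: "subgroup H (Aut n)"
    and adjacent: "\<And>i. i \<in> {1..n - 1} \<Longrightarrow> alpha n (transpose i (i + 1)) \<in> H"
    and a: "a \<in> {1..n}" and b: "b \<in> {1..n}"
  shows "alpha n (transpose a b) \<in> H"
proof -
  have far: "alpha n (transpose a (a + d)) \<in> H" if "a \<in> {1..n}" "a + d \<in> {1..n}" for a d
    using that
  proof (induct d arbitrary: a)
    case 0
    then show ?case
      using alpha_id[of n] subgroup.one_closed[OF H] by (simp add: id_def)
  next
    case (Suc d)
    show ?case
    proof (cases "d = 0")
      case True
      then show ?thesis
        using Suc.prems adjacent[of a] by simp
    next
      case False
      have t: "transpose a (a + 1) permutes {1..n}" "transpose (a + 1) (a + 1 + d) permutes {1..n}"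
        using Suc.prems by (auto intro!: permutes_swap_id)
      have "transpose a (a + Suc d) =
          transpose a (a + 1) \<circ> transpose (a + 1) (a + 1 + d) \<circ> transpose a (a + 1)"
        using False transpose_comp_triple[of a "a + 1 + d" "a + 1"] by simp
      then have "alpha n (transpose a (a + Suc d)) =
          alpha n (transpose a (a + 1)) \<otimes>\<^bsub>Aut n\<^esub> alpha n (transpose (a + 1) (a + 1 + d))
            \<otimes>\<^bsub>Aut n\<^esub> alpha n (transpose a (a + 1))"
        by (simp only: alpha_comp[OF permutes_compose[OF t(2,1)] t(1)] alpha_comp[OF t])
      moreover have "alpha n (transpose a (a + 1)) \<in> H"
        using Suc.prems by (intro adjacent) auto
      moreover have "alpha n (transpose (a + 1) (a + 1 + d)) \<in> H"
        using Suc.prems by (intro Suc.hyps) auto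
      ultimately show ?thesis
        by (simp add: subgroup.m_closed[OF H])
    qed
  qed
  show ?thesis
  proof (cases "a \<le> b")
    case True
    then show ?thesis using far[of a "b - a"] a b by simp
  next
    case False
    then show ?thesis using far[of b "a - b"] a b by (simp add: transpose_commute)
  qed
qed

lemma alpha_in_subgroup:
  assumes H: "subgroup H (Aut n)"
    and adjacent: "\<And>i. i \<in> {1..n - 1} \<Longrightarrow> alpha n (transpose i (i + 1)) \<in> H"
    and p: "p permutes {1..n}"
  shows "alpha n p \<in> H"
  using p finite_atLeastAtMost[of 1 n]
proof (induct p rule: permutes_induct)
  case id
  then show ?case
    using alpha_id[of n] subgroup.one_closed[OF H] by (simp only:)
next
  case (swap a b p)
  then have "alpha n (transpose a b \<circ> p) = alpha n (transpose a b) \<otimes>\<^bsub>Aut n\<^esub> alpha n p"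
    by (intro alpha_comp permutes_swap_id)
  then show ?case
    using alpha_transpose_in_subgroup[OF H adjacent swap(1,2)] swap(4) subgroup.m_closed[OF H]
    by metis
qed

lemma sigma_in_subgroup:
  assumes H: "subgroup H (Aut n)"
    and perms: "\<And>p. p permutes {1..n} \<Longrightarrow> alpha n p \<in> H"
    and kl: "k \<in> {1..n}" "l \<in> {1..n}" "k \<noteq> l" "sigma n k l \<in> H"
    and ij: "i \<in> {1..n}" "j \<in> {1..n}" "i \<noteq> j"
  shows "sigma n i j \<in> H"
proof -
  define p where "p = transpose (transpose k i l) j \<circ> transpose k i"
  have p: "p permutes {1..n}"
    unfolding p_def using kl ij
    by (intro permutes_compose permutes_swap_id) (auto simp: transpose_def)
  have "p k = i" "p l = j"
    using kl ij by (auto simp: p_def transpose_def)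
  then have "alpha n p \<otimes>\<^bsub>Aut n\<^esub> sigma n k l = sigma n i j \<otimes>\<^bsub>Aut n\<^esub> alpha n p"
    using alpha_mult_sigma[OF p kl(1-3)] by simp
  then have "sigma n i j = alpha n p \<otimes>\<^bsub>Aut n\<^esub> sigma n k l \<otimes>\<^bsub>Aut n\<^esub> inv\<^bsub>Aut n\<^esub> alpha n p"
    using alpha_auto[OF p] sigma_auto[OF kl(1-3)] sigma_auto[OF ij] Aut_mult_closed
    by (simp add: group.inv_solve_right[OF group_Aut] Aut_carrier)
  then show ?thesis
    using perms[OF p] kl(4) subgroup.m_closed[OF H] subgroup.m_inv_closed[OF H] by simp
qed

section \<open>Palindromic images and peak reduction\<close>

lemma reduced_palindrome_center:
  assumes "reduced u" "u \<noteq> []" "rev u = u"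
  shows "\<exists>w a. u = w @ [a] @ rev w"
  using assms
proof (induct "length u" arbitrary: u rule: less_induct)
  case less
  obtain x t where u: "u = x # t"
    using less.prems(2) by (cases u) auto
  show ?case
  proof (cases t rule: rev_cases)
    case Nil
    then show ?thesis using u by (intro exI[of _ "[]"]) simp
  next
    case (snoc m y)
    have "rev u = y # rev m @ [x]"
      using u snoc by simp
    then have "y # rev m @ [x] = x # m @ [y]"
      using less.prems(3) u snoc by (simp only:)
    then have "y = x" and m: "rev m @ [x] = m @ [y]"
      by (simp_all only: list.inject)
    then have "rev m = m"
      using m by (simp only: append_same_eq)
    moreover have "m \<noteq> []" "reduced m"
      using less.prems(1) u snoc \<open>y = x\<close> by (auto simp: successively_append_iff successively_Cons)
    moreover have "length m < length u"
      using u snoc by simp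
    ultimately obtain v b where "m = v @ [b] @ rev v"
      using less.hyps by blast
    then show ?thesis
      using u snoc \<open>y = x\<close> by (intro exI[of _ "x # v"] exI[of _ b]) simp
  qed
qed

lemma reduced_involution_center:
  assumes "reduced u" "u \<noteq> []" "red (u @ u) = []"
  shows "\<exists>w a. u = w @ [a] @ rev w"
  using reduced_palindrome_center[OF assms(1,2)] red_append_eq_Nil_imp_rev[OF assms(1,1,3)]
  by simp

lemma prefix_red_palindrome_append:
  assumes "reduced (w @ [a] @ rev w)" "reduced v" "\<not> prefix (w @ [a]) v"
  shows "prefix (w @ [a]) (red ((w @ [a] @ rev w) @ v))"
  using assms
proof (induct w arbitrary: v)
  case Nil
  then have "reduced (a # v)"
    by (cases v) (auto simp: successively_Cons)
  then show ?case
    by (simp add: red_reduced)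
next
  case (Cons b w)
  define u where "u = w @ [a] @ rev w"
  have reduced_bub: "reduced (b # u @ [b])"
    using Cons.prems(1) by (simp add: u_def)
  then have reduced_u: "reduced u"
    by (simp add: successively_append_iff successively_Cons)
  show ?case
  proof (cases v)
    case (Cons c v')
    show ?thesis
    proof (cases "c = b")
      case True
      have "\<not> prefix (w @ [a]) v'" "reduced v'"
        using Cons.prems(2,3) \<open>v = c # v'\<close> True by (auto simp: successively_Cons)
      then obtain r where r: "red (u @ v') = w @ [a] @ r"
        using Cons.hyps reduced_u by (auto simp: u_def prefix_def)
      have "hd (w @ [a]) \<noteq> b"
        using reduced_bub by (cases w) (auto simp: u_def successively_Cons)
      moreover have "red ((b # w) @ [a] @ rev (b # w) @ v) = cancel_cons b (red (u @ v'))"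
        using red_cancel_pair[of "b # u" b v'] \<open>v = c # v'\<close> True by (simp add: u_def red_Cons)
      ultimately show ?thesis
        using r by (cases w) (auto simp: cancel_cons_def)
    next
      case False
      then have "reduced ((b # u @ [b]) @ v)"
        using reduced_bub Cons.prems(2) \<open>v = c # v'\<close>
        unfolding successively_append_iff[of _ "b # u @ [b]" v] by auto
      then show ?thesis
        by (simp add: red_reduced u_def)
    qed
  qed (use reduced_bub in \<open>simp add: red_reduced u_def\<close>)
qed

lemma length_red_conj_palindrome_less:
  assumes "prefix (v @ [b]) w"
  shows "length (red ((v @ [b] @ rev v) @ (w @ [c] @ rev w) @ (v @ [b] @ rev v)))
    < length (w @ [c] @ rev w)"
proof -
  obtain z where w: "w = v @ [b] @ z"
    using assms by (auto simp: prefix_def)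
  define inner where "inner = z @ [c] @ rev z"
  have "(v @ [b] @ rev v) @ (w @ [c] @ rev w) @ (v @ [b] @ rev v)
      = (v @ [b]) @ rev v @ v @ ([b] @ inner @ [b] @ rev v @ v @ [b] @ rev v)"
    by (simp add: w inner_def)
  then have "red ((v @ [b] @ rev v) @ (w @ [c] @ rev w) @ (v @ [b] @ rev v))
      = red (v @ [b, b] @ inner @ [b] @ rev v @ v @ [b] @ rev v)"
    using red_cancel_middle[of "v @ [b]" v] by simp
  also have "\<dots> = red ((v @ inner @ [b]) @ rev v @ v @ [b] @ rev v)"
    using red_cancel_pair[of v b] by simp
  also have "\<dots> = red ((v @ inner) @ [b, b] @ rev v)"
    using red_cancel_middle[of "v @ inner @ [b]" v] by simp
  also have "\<dots> = red (v @ inner @ rev v)"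
    using red_cancel_pair[of "v @ inner" b] by simp
  finally show ?thesis
    using length_red[of "v @ inner @ rev v"] by (simp add: w inner_def)
qed

lemma auto_W_eq_red_concat:
  "f \<in> auto (W n) \<Longrightarrow> v \<in> carrier (W n) \<Longrightarrow> f v = red (concat (map (\<lambda>x. f [x]) v))"
  using hom_W_eq_ext_hom[of f n v] by (simp add: auto_def ext_hom_def)

lemma auto_W_Nil: "f \<in> auto (W n) \<Longrightarrow> f [] = []"
  using hom_one[OF _ group_W group_W, of f n n] by (simp add: auto_def W_one)

lemma auto_W_letter_in_carrier: "f \<in> auto (W n) \<Longrightarrow> i \<in> {1..n} \<Longrightarrow> f [i] \<in> carrier (W n)"
  using letter_in_carrier_W[of i n] by (auto simp: auto_def Bij_def bij_betw_def)

lemma auto_W_letter_inj: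
  "f \<in> auto (W n) \<Longrightarrow> i \<in> {1..n} \<Longrightarrow> j \<in> {1..n} \<Longrightarrow> f [i] = f [j] \<Longrightarrow> i = j"
  using letter_in_carrier_W[of _ n] by (auto simp: auto_def Bij_def bij_betw_def dest: inj_onD)

lemma auto_W_letter_palindrome:
  assumes f: "f \<in> auto (W n)" and i: "i \<in> {1..n}"
  shows "\<exists>w a. f [i] = w @ [a] @ rev w"
proof (rule reduced_involution_center)
  show "reduced (f [i])"
    using auto_W_letter_in_carrier[OF f i] by (simp add: W_carrier)
  have "[] \<in> carrier (W n)" "[i] \<in> carrier (W n)"
    using i by (simp_all add: W_carrier)
  moreover have "inj_on f (carrier (W n))"
    using f by (simp add: auto_def Bij_def bij_betw_def)
  ultimately show "f [i] \<noteq> []"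
    using auto_W_Nil[OF f] by (metis inj_onD list.distinct(1))
  have "f ([i] \<otimes>\<^bsub>W n\<^esub> [i]) = f [i] \<otimes>\<^bsub>W n\<^esub> f [i]"
    using f letter_in_carrier_W[OF i] by (simp add: auto_def hom_mult)
  then show "red (f [i] @ f [i]) = []"
    using auto_W_Nil[OF f] by (simp add: W_mult red_Cons cancel_cons_def)
qed

lemma auto_W_letter_images_eq_alpha:
  assumes f: "f \<in> auto (W n)" and letters: "\<And>i. i \<in> {1..n} \<Longrightarrow> f [i] = [a i]"
  shows "\<exists>p. p permutes {1..n} \<and> f = alpha n p"
proof -
  define p where "p x = (if x \<in> {1..n} then a x else x)" for x
  have "inj_on p {1..n}"
    using auto_W_letter_inj[OF f] letters by (auto simp: p_def inj_on_def)
  moreover have "p ` {1..n} \<subseteq> {1..n}"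
    using auto_W_letter_in_carrier[OF f] letters by (auto simp: p_def W_carrier)
  ultimately have "bij_betw p {1..n} {1..n}"
    using endo_inj_surj[of "{1..n}" p] by (simp add: bij_betw_def)
  then have p: "p permutes {1..n}"
    by (rule bij_imp_permutes) (auto simp: p_def)
  have "f = alpha n p"
    by (rule Aut_eqI[OF f alpha_auto[OF p]]) (simp add: alpha_letter letters p_def)
  with p show ?thesis by blast
qed

definition images_length :: "nat \<Rightarrow> (nat list \<Rightarrow> nat list) \<Rightarrow> nat" where
  "images_length n f = (\<Sum>i\<in>{1..n}. length (f [i]))"

locale palindromic_auto =
  fixes n :: nat and f :: "nat list \<Rightarrow> nat list" and w :: "nat \<Rightarrow> nat list" and a :: "nat \<Rightarrow> nat"
  assumes auto: "f \<in> auto (W n)"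
    and palindrome: "i \<in> {1..n} \<Longrightarrow> f [i] = w i @ [a i] @ rev (w i)"
begin

abbreviation half :: "nat \<Rightarrow> nat list" where
  "half i \<equiv> w i @ [a i]"

definition nested :: bool where
  "nested \<longleftrightarrow> (\<exists>k\<in>{1..n}. \<exists>i\<in>{1..n}. k \<noteq> i \<and> prefix (half k) (w i))"

lemma half_prefix_unique:
  assumes "\<not> nested" and j: "j \<in> {1..n}" "j' \<in> {1..n}" "j \<noteq> j'"
    and "prefix (half j) z" "prefix (half j') z"
  shows False
proof -
  have False if "prefix (half k) (half k')" "k \<in> {1..n}" "k' \<in> {1..n}" "k \<noteq> k'" for k k'
  proof (cases "half k = half k'")
    case True
    then have "f [k] = f [k']"
      using palindrome that(2,3) by simp
    then show False
      using auto_W_letter_inj[OF auto that(2,3)] that(4) by blast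
  next
    case False
    then have "prefix (half k) (w k')"
      using that(1) by (simp only: prefix_snoc) simp
    then show False
      using assms(1) that(2-4) unfolding nested_def by blast
  qed
  then show False
    using prefix_same_cases[OF assms(5,6)] j by blast
qed

lemma prefix_half_image:
  assumes "\<not> nested" and v: "v \<in> carrier (W n)" "v \<noteq> []"
  shows "prefix (half (hd v)) (f v)"
  using v
proof (induct v)
  case (Cons j v)
  have j: "j \<in> {1..n}" and v_carrier: "v \<in> carrier (W n)"
    using Cons.prems(1) by (auto simp: W_carrier successively_Cons)
  have reduced_image: "reduced (w j @ [a j] @ rev (w j))"
    using auto_W_letter_in_carrier[OF auto j] palindrome[OF j] by (simp add: W_carrier)
  have f_Cons: "f (j # v) = red (f [j] @ f v)"
    using auto_W_eq_red_concat[OF auto] Cons.prems(1) v_carrier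
    by (simp add: red_append_red_right)
  show ?case
  proof (cases "v = []")
    case True
    then show ?thesis
      using f_Cons palindrome[OF j] reduced_image auto_W_Nil[OF auto] by (simp add: red_reduced)
  next
    case False
    have "hd v \<in> {1..n}" "hd v \<noteq> j"
      using Cons.prems(1) False by (cases v; auto simp: W_carrier)+
    moreover have "prefix (half (hd v)) (f v)"
      using Cons.hyps[OF v_carrier False] .
    ultimately have "\<not> prefix (half j) (f v)"
      using half_prefix_unique[OF assms(1) j] by blast
    moreover have "reduced (f v)"
      using auto v_carrier by (auto simp: auto_def Bij_def bij_betw_def W_carrier)
    ultimately show ?thesis
      using prefix_red_palindrome_append[OF reduced_image] f_Cons palindrome[OF j]
      by simp
  qed
qed simp

lemma nested_if_not_letter:
  assumes i: "i \<in> {1..n}" and "w i \<noteq> []"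
  shows nested
proof (rule ccontr)
  assume not_nested: "\<not> nested"
  obtain c ws where w_i: "w i = c # ws"
    using \<open>w i \<noteq> []\<close> by (cases "w i") auto
  have "[c] \<in> carrier (W n)"
    using auto_W_letter_in_carrier[OF auto i] palindrome[OF i] w_i by (simp add: W_carrier)
  then have "[c] \<in> f ` carrier (W n)"
    using auto by (simp add: auto_def Bij_def bij_betw_def)
  then obtain v where v: "v \<in> carrier (W n)" "f v = [c]"
    by auto
  have "v \<noteq> []"
    using v auto_W_Nil[OF auto] by auto
  then have "prefix (half (hd v)) [c]"
    using prefix_half_image[OF not_nested v(1)] v(2) by simp
  then have "half (hd v) = [c]"
    by (auto simp: prefix_Cons)
  moreover have "hd v \<in> {1..n}"
    using v(1) \<open>v \<noteq> []\<close> by (cases v) (auto simp: W_carrier)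
  moreover have "hd v \<noteq> i" "prefix (half (hd v)) (w i)"
    using \<open>half (hd v) = [c]\<close> w_i by auto
  ultimately show False
    using not_nested i unfolding nested_def by blast
qed

lemma images_length_mult_sigma_less:
  assumes k: "k \<in> {1..n}" and i: "i \<in> {1..n}" "k \<noteq> i" and "prefix (half k) (w i)"
  shows "images_length n (f \<otimes>\<^bsub>Aut n\<^esub> sigma n k i) < images_length n f"
proof -
  have sigma: "sigma n k i \<in> auto (W n)"
    using sigma_auto[OF k i] .
  have image: "(f \<otimes>\<^bsub>Aut n\<^esub> sigma n k i) [j] =
      (if j = i then red (f [k] @ f [i] @ f [k]) else f [j])" if j: "j \<in> {1..n}" for j
  proof -
    have "[k, i, k] \<in> carrier (W n)"
      using k i by (simp add: W_carrier)
    then show ?thesis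
      using j i auto_W_eq_red_concat[OF auto, of "[k, i, k]"]
      by (simp add: Aut_mult[OF auto sigma] compose_def letter_in_carrier_W sigma_letter
          red_append_red_right)
  qed
  have shorter: "length (red (f [k] @ f [i] @ f [k])) < length (f [i])"
    using length_red_conj_palindrome_less[OF assms(4)] palindrome[OF k] palindrome[OF i(1)] by simp
  show ?thesis
    unfolding images_length_def
  proof (rule sum_strict_mono_ex1)
    show "\<forall>j\<in>{1..n}. length ((f \<otimes>\<^bsub>Aut n\<^esub> sigma n k i) [j]) \<le> length (f [j])"
      using shorter by (simp add: image)
    show "\<exists>j\<in>{1..n}. length ((f \<otimes>\<^bsub>Aut n\<^esub> sigma n k i) [j]) < length (f [j])"
      using shorter i by (auto simp: image)
  qed simp
qed

end

lemma auto_in_subgroup: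
  assumes H: "subgroup H (Aut n)"
    and perms: "\<And>p. p permutes {1..n} \<Longrightarrow> alpha n p \<in> H"
    and conjs: "\<And>i j. i \<in> {1..n} \<Longrightarrow> j \<in> {1..n} \<Longrightarrow> i \<noteq> j \<Longrightarrow> sigma n i j \<in> H"
    and f: "f \<in> auto (W n)"
  shows "f \<in> H"
  using f
proof (induct "images_length n f" arbitrary: f rule: less_induct)
  case less
  obtain w a where "\<forall>i\<in>{1..n}. f [i] = w i @ [a i] @ rev (w i)"
    using auto_W_letter_palindrome[OF less.prems] by metis
  then interpret palindromic_auto n f w a
    using less.prems by unfold_locales auto
  show ?case
  proof (cases "\<forall>i\<in>{1..n}. w i = []")
    case True
    then obtain p where "p permutes {1..n}" "f = alpha n p"
      using auto_W_letter_images_eq_alpha[OF auto, of a] palindrome by auto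
    then show ?thesis
      using perms by simp
  next
    case False
    then obtain k i where ki: "k \<in> {1..n}" "i \<in> {1..n}" "k \<noteq> i" "prefix (half k) (w i)"
      using nested_if_not_letter unfolding nested_def by blast
    have sigma: "sigma n k i \<in> auto (W n)"
      using sigma_auto[OF ki(1-3)] .
    have "f \<otimes>\<^bsub>Aut n\<^esub> sigma n k i \<in> H"
      using less.hyps[OF images_length_mult_sigma_less[OF ki]] Aut_mult_closed[OF auto sigma] .
    moreover have "f = (f \<otimes>\<^bsub>Aut n\<^esub> sigma n k i) \<otimes>\<^bsub>Aut n\<^esub> inv\<^bsub>Aut n\<^esub> sigma n k i"
      using auto sigma by (simp add: group.inv_solve_right[OF group_Aut] Aut_carrier Aut_mult_closed)
    ultimately show ?thesis
      using conjs[OF ki(1-3)] subgroup.m_closed[OF H] subgroup.m_inv_closed[OF H] by metis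
  qed
qed

theorem proposition2p1:
  fixes n k l :: nat
  assumes "2 \<le> n" and "k \<in> {1..n}" and "l \<in> {1..n}" and "k \<noteq> l"
  shows "generate (AutoGroup (W n))
           (insert (sigma n k l) ((\<lambda>i. alpha n (transpose i (i + 1))) ` {1..n - 1}))
         = carrier (AutoGroup (W n))"
    (is "generate _ ?Y = _")
proof
  have "?Y \<subseteq> carrier (Aut n)"
    using sigma_auto[OF assms(2-4)] by (auto simp: Aut_carrier intro!: alpha_auto permutes_swap_id)
  then show "generate (Aut n) ?Y \<subseteq> carrier (Aut n)"
    by (rule group.generate_incl[OF group_Aut])
  have H: "subgroup (generate (Aut n) ?Y) (Aut n)"
    using group.generate_is_subgroup[OF group_Aut \<open>?Y \<subseteq> _\<close>] .
  have perms: "alpha n p \<in> generate (Aut n) ?Y" if "p permutes {1..n}" for p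
    by (rule alpha_in_subgroup[OF H _ that], rule generate.incl) auto
  have "sigma n i j \<in> generate (Aut n) ?Y" if "i \<in> {1..n}" "j \<in> {1..n}" "i \<noteq> j" for i j
    using sigma_in_subgroup[OF H perms assms(2-4) _ that] by (auto intro: generate.incl)
  then show "carrier (Aut n) \<subseteq> generate (Aut n) ?Y"
    using auto_in_subgroup[OF H perms] by (auto simp: Aut_carrier)
qed

end
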